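(* Let $D=\mathrm{diag}(d_1,\dots,d_n)$ be real diagonal, $\beta_1,\beta_2\neq0$ real, $\mathbf v_1,\mathbf v_2\in\mathbb R^n$ with entries $v_{1q},v_{2q}$, and $M=D+\beta_1\mathbf v_1\mathbf v_1^T+\beta_2\mathbf v_2\mathbf v_2^T$. Fix an index $i$ such that $d_j\neq d_i$ for all $j\neq i$, and suppose $v_{1i}=0$ and $v_{2i}\neq0$. Define $f_{11}(\lambda)=1-\beta_1\sum_{q\neq i}\frac{v_{1q}^2}{\lambda-d_q}$. Then $d_i$ is an eigenvalue of $M$ if and only if $f_{11}(d_i)=0$; in that case the eigenspace is spanned by the vector $\mathbf x$ with $x_q=\frac{v_{1q}}{d_q-d_i}$ for $q\neq i$ and $x_i$ determined by $\mathbf v_2^T\mathbf x=0$, i.e. $x_i=-\frac1{v_{2i}}\sum_{q\ne i}v_{2q}x_q$. Symmetrically, if $v_{1i}\neq0$ and $v_{2i}=0$, then $d_i$ is an eigenvalue of $M$ iff $f_{12}(d_i)=0$, where $f_{12}(\lambda)=1-\beta_2\sum_{q\neq i}\frac{v_{2q}^2}{\lambda-d_q}$. *)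

theory Defs
  imports "HOL-Analysis.Analysis"
begin

definition diag_mat :: "('n::finite \<Rightarrow> real) \<Rightarrow> real^'n^'n" where
  "diag_mat d = (\<chi> p q. if p = q then d p else 0)"

definition outer :: "real^'n::finite \<Rightarrow> real^'n^'n" where
  "outer v = (\<chi> p q. v $ p * v $ q)"

definition is_eigenvalue :: "real^'n::finite^'n \<Rightarrow> real \<Rightarrow> bool" where
  "is_eigenvalue M l \<longleftrightarrow> (\<exists>x. x \<noteq> 0 \<and> M *v x = l *s x)"

definition eigenspace :: "real^'n::finite^'n \<Rightarrow> real \<Rightarrow> (real^'n) set" where
  "eigenspace M l = {x. M *v x = l *s x}"

end

theory Submission
  imports Defs
begin

text \<open>
  Write \<open>M = D + b u u\<^sup>T + c w w\<^sup>T\<close> with \<open>u\<^sub>i = 0\<close> and \<open>c w\<^sub>i \<noteq> 0\<close>. Row \<open>i\<close> of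
  \<open>(M - d\<^sub>i) x = 0\<close> only sees \<open>w\<close> and forces \<open>w \<bullet> x = 0\<close>; the other rows then give
  \<open>x\<^sub>q = -b (u \<bullet> x) u\<^sub>q / (d\<^sub>q - d\<^sub>i)\<close>. So every eigenvector is a multiple
  \<open>k \<cdot> x\<^sub>0\<close> of one candidate vector whose \<open>i\<close>-th entry is fixed by \<open>w \<bullet> x\<^sub>0 = 0\<close>, and pairing with
  \<open>u\<close> gives \<open>k = b k \<Sigma>\<^sub>q\<^sub>\<noteq>\<^sub>i u\<^sub>q\<^sup>2 / (d\<^sub>i - d\<^sub>q)\<close>: a nonzero \<open>k\<close> exists exactly when the
  secular function vanishes at \<open>d\<^sub>i\<close>.
\<close>

lemma diag_mat_mult_vector: "diag_mat d *v x = (\<chi> p. d p * x $ p)"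
  by (simp add: vec_eq_iff matrix_vector_mult_def diag_mat_def if_distrib[where f="\<lambda>a. a * _"]
      cong: if_cong)

lemma outer_mult_vector: "outer u *v x = (u \<bullet> x) *\<^sub>R u"
  by (simp add: vec_eq_iff matrix_vector_mult_def outer_def inner_vec_def sum_distrib_left
      mult_ac)

lemma inner_vec_remove:
  fixes u x :: "real^'n::finite"
  shows "u \<bullet> x = u $ i * x $ i + (\<Sum>q\<in>UNIV - {i}. u $ q * x $ q)"
  unfolding inner_vec_def by (simp add: sum.remove[of UNIV i])

text \<open>Both cases of the theorem are instances, with the two update vectors exchanged.\<close>
locale diag_rank_two_update =
  fixes d :: "'n::finite \<Rightarrow> real" and b c :: real and u w :: "real^'n" and i :: 'n
  assumes c_nonzero: "c \<noteq> 0"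
    and w_i_nonzero: "w $ i \<noteq> 0"
    and u_i_zero: "u $ i = 0"
    and d_i_simple: "\<And>j. j \<noteq> i \<Longrightarrow> d j \<noteq> d i"
begin

definition M :: "real^'n^'n" where
  "M = diag_mat d + b *\<^sub>R outer u + c *\<^sub>R outer w"

definition secular_sum :: real where
  "secular_sum = (\<Sum>q\<in>UNIV - {i}. (u $ q)^2 / (d i - d q))"

definition candidate :: "real^'n" where
  "candidate = (\<chi> q. if q = i
      then - (1 / w $ i) * (\<Sum>p\<in>UNIV - {i}. w $ p * (u $ p / (d p - d i)))
      else u $ q / (d q - d i))"

lemma M_mult_component:
  "(M *v x) $ p = d p * x $ p + b * (u \<bullet> x) * u $ p + c * (w \<bullet> x) * w $ p"
  by (simp add: M_def matrix_vector_mult_add_rdistrib diag_mat_mult_vector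
      flip: scaleR_matrix_vector_assoc) (simp add: outer_mult_vector)

lemma eigvec_iff:
  "M *v x = d i *s x \<longleftrightarrow>
     w \<bullet> x = 0 \<and> (\<forall>p. p \<noteq> i \<longrightarrow> (d p - d i) * x $ p = - b * (u \<bullet> x) * u $ p)"
proof -
  have "M *v x = d i *s x \<longleftrightarrow>
      (\<forall>p. d p * x $ p + b * (u \<bullet> x) * u $ p + c * (w \<bullet> x) * w $ p = d i * x $ p)"
    by (simp add: vec_eq_iff M_mult_component)
  also have "\<dots> \<longleftrightarrow> c * (w \<bullet> x) * w $ i = 0 \<and>
      (\<forall>p. p \<noteq> i \<longrightarrow> d p * x $ p + b * (u \<bullet> x) * u $ p + c * (w \<bullet> x) * w $ p = d i * x $ p)"
    using u_i_zero by (metis add.right_neutral mult_zero_right add_left_imp_eq)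
  also have "\<dots> \<longleftrightarrow> w \<bullet> x = 0 \<and> (\<forall>p. p \<noteq> i \<longrightarrow> (d p - d i) * x $ p = - b * (u \<bullet> x) * u $ p)"
    using c_nonzero w_i_nonzero by (auto simp: algebra_simps)
  finally show ?thesis .
qed

lemma eq_scaleR_candidate:
  assumes "w \<bullet> x = 0" and "\<And>p. p \<noteq> i \<Longrightarrow> x $ p = k * (u $ p / (d p - d i))"
  shows "x = k *\<^sub>R candidate"
proof -
  have "0 = w $ i * x $ i + (\<Sum>q\<in>UNIV - {i}. w $ q * x $ q)"
    using assms(1) inner_vec_remove by metis
  also have "(\<Sum>q\<in>UNIV - {i}. w $ q * x $ q) = k * (\<Sum>q\<in>UNIV - {i}. w $ q * (u $ q / (d q - d i)))"
    by (simp add: sum_distrib_left assms(2) mult.left_commute)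
  finally have "x $ i = k * candidate $ i"
    using w_i_nonzero by (simp add: candidate_def field_simps)
  then show ?thesis
    using assms(2) by (simp add: vec_eq_iff candidate_def)
qed

lemma inner_u_candidate: "u \<bullet> candidate = - secular_sum"
proof -
  have "u \<bullet> candidate = (\<Sum>q\<in>UNIV - {i}. u $ q * candidate $ q)"
    using u_i_zero by (simp add: inner_vec_remove[of u candidate i])
  also have "\<dots> = (\<Sum>q\<in>UNIV - {i}. - ((u $ q)^2 / (d i - d q)))"
  proof (rule sum.cong)
    fix q assume "q \<in> UNIV - {i}"
    then show "u $ q * candidate $ q = - ((u $ q)^2 / (d i - d q))"
      by (simp add: candidate_def power2_eq_square minus_divide_right)
  qed simp
  finally show ?thesis
    by (simp add: secular_sum_def sum_negf)
qed

lemma inner_w_candidate: "w \<bullet> candidate = 0"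
proof -
  let ?y = "\<lambda>q. u $ q / (d q - d i)"
  have "w \<bullet> candidate = w $ i * candidate $ i + (\<Sum>q\<in>UNIV - {i}. w $ q * candidate $ q)"
    by (rule inner_vec_remove)
  also have "(\<Sum>q\<in>UNIV - {i}. w $ q * candidate $ q) = (\<Sum>q\<in>UNIV - {i}. w $ q * ?y q)"
    by (rule sum.cong) (auto simp: candidate_def)
  also have "w $ i * candidate $ i = - (\<Sum>q\<in>UNIV - {i}. w $ q * ?y q)"
    using w_i_nonzero by (simp add: candidate_def)
  finally show ?thesis by simp
qed

lemma eigvec_eq_scaleR_candidate:
  assumes "M *v x = d i *s x"
  shows "x = (- b * (u \<bullet> x)) *\<^sub>R candidate"
proof (rule eq_scaleR_candidate)
  show "w \<bullet> x = 0" using assms eigvec_iff by blast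
  fix p assume "p \<noteq> i"
  then show "x $ p = - b * (u \<bullet> x) * (u $ p / (d p - d i))"
    using assms eigvec_iff d_i_simple[of p] by (simp add: field_simps)
qed

lemma eigenspace_subset: "eigenspace M (d i) \<subseteq> span {candidate}"
proof
  fix x assume "x \<in> eigenspace M (d i)"
  then have "x = (- b * (u \<bullet> x)) *\<^sub>R candidate"
    by (intro eigvec_eq_scaleR_candidate) (simp add: eigenspace_def)
  then show "x \<in> span {candidate}"
    by (metis span_base span_scale singletonI)
qed

lemma candidate_eigvec:
  assumes "1 - b * secular_sum = 0"
  shows "M *v candidate = d i *s candidate"
proof -
  have "(d p - d i) * candidate $ p = u $ p" if "p \<noteq> i" for p
    using that d_i_simple[of p] by (simp add: candidate_def)
  moreover have "- b * (u \<bullet> candidate) = 1"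
    using assms by (simp add: inner_u_candidate)
  ultimately show ?thesis
    unfolding eigvec_iff using inner_w_candidate by simp
qed

lemma eigenvalue_iff: "is_eigenvalue M (d i) \<longleftrightarrow> 1 - b * secular_sum = 0"
proof
  assume "is_eigenvalue M (d i)"
  then obtain x where "x \<noteq> 0" and x: "M *v x = d i *s x"
    unfolding is_eigenvalue_def by blast
  define k where "k = - b * (u \<bullet> x)"
  have "x = k *\<^sub>R candidate"
    using eigvec_eq_scaleR_candidate[OF x] by (simp add: k_def)
  with \<open>x \<noteq> 0\<close> have "k \<noteq> 0" by auto
  have "u \<bullet> x = - k * secular_sum"
    using \<open>x = k *\<^sub>R candidate\<close> by (simp add: inner_u_candidate)
  then have "k * (1 - b * secular_sum) = 0"
    using k_def by (simp add: algebra_simps)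
  with \<open>k \<noteq> 0\<close> show "1 - b * secular_sum = 0"
    by simp
next
  assume f: "1 - b * secular_sum = 0"
  then have "candidate \<noteq> 0"
    using inner_u_candidate by auto
  with candidate_eigvec[OF f] show "is_eigenvalue M (d i)"
    unfolding is_eigenvalue_def by blast
qed

lemma eigenspace_eq_span:
  assumes "1 - b * secular_sum = 0"
  shows "eigenspace M (d i) = span {candidate}"
proof
  show "span {candidate} \<subseteq> eigenspace M (d i)"
    using candidate_eigvec[OF assms]
    by (auto simp: span_singleton eigenspace_def matrix_vector_mult_scaleR vec_eq_iff)
qed (fact eigenspace_subset)

end

theorem mainTheorem3:
  fixes d :: "'n::finite \<Rightarrow> real"
    and b1 b2 :: real
    and v1 v2 :: "real^'n"
    and i :: 'n
  assumes "b1 \<noteq> 0" and "b2 \<noteq> 0"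
    and "\<And>j. j \<noteq> i \<Longrightarrow> d j \<noteq> d i"
  defines "M \<equiv> diag_mat d + b1 *\<^sub>R outer v1 + b2 *\<^sub>R outer v2"
    and "f11 \<equiv> (\<lambda>l. 1 - b1 * (\<Sum>q\<in>UNIV - {i}. (v1 $ q)^2 / (l - d q)))"
    and "f12 \<equiv> (\<lambda>l. 1 - b2 * (\<Sum>q\<in>UNIV - {i}. (v2 $ q)^2 / (l - d q)))"
  shows
    "(v1 $ i = 0 \<and> v2 $ i \<noteq> 0 \<longrightarrow>
        (is_eigenvalue M (d i) \<longleftrightarrow> f11 (d i) = 0) \<and>
        (f11 (d i) = 0 \<longrightarrow>
           (let y = (\<lambda>q. v1 $ q / (d q - d i));
                x = (\<chi> q. if q = i
                           then - (1 / v2 $ i) * (\<Sum>p\<in>UNIV - {i}. v2 $ p * y p)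
                           else y q)
            in eigenspace M (d i) = span {x})))
     \<and>
     (v1 $ i \<noteq> 0 \<and> v2 $ i = 0 \<longrightarrow>
        (is_eigenvalue M (d i) \<longleftrightarrow> f12 (d i) = 0))"
proof (intro conjI impI)
  assume "v1 $ i = 0 \<and> v2 $ i \<noteq> 0"
  then interpret U: diag_rank_two_update d b1 b2 v1 v2 i
    using assms by unfold_locales auto
  have "M = U.M" "f11 (d i) = 1 - b1 * U.secular_sum"
    by (simp_all add: M_def U.M_def f11_def U.secular_sum_def)
  then show "is_eigenvalue M (d i) \<longleftrightarrow> f11 (d i) = 0"
    and "f11 (d i) = 0 \<Longrightarrow> let y = (\<lambda>q. v1 $ q / (d q - d i));
           x = (\<chi> q. if q = i then - (1 / v2 $ i) * (\<Sum>p\<in>UNIV - {i}. v2 $ p * y p) else y q)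
         in eigenspace M (d i) = span {x}"
    using U.eigenvalue_iff U.eigenspace_eq_span by (simp_all add: U.candidate_def)
next
  assume "v1 $ i \<noteq> 0 \<and> v2 $ i = 0"
  then interpret U: diag_rank_two_update d b2 b1 v2 v1 i
    using assms by unfold_locales auto
  have "M = U.M" "f12 (d i) = 1 - b2 * U.secular_sum"
    by (simp_all add: M_def U.M_def f12_def U.secular_sum_def add_ac)
  then show "is_eigenvalue M (d i) \<longleftrightarrow> f12 (d i) = 0"
    using U.eigenvalue_iff by simp
qed

end
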